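(* Let $G$ be a graph on $n$ vertices and let $\mathcal{C}$ be a clique geometry in $G$ such that every vertex belongs to at least $r\ge 2$ and at most $R$ members of $\mathcal{C}$, and every member of $\mathcal{C}$ has order at least $\ell$. Then \[ \ell \le \frac{R}{\sqrt{r(r-1)}}\sqrt{n}. \]
   Context: The order of a clique is its number of vertices. A collection $\mathcal{C}$ of cliques of a graph is a clique geometry if (i) every clique in $\mathcal{C}$ is a maximal clique and (ii) every pair of adjacent vertices belongs to exactly one member of $\mathcal{C}$. *)

theory Defs
  imports Complex_Main
begin

definition simple_graph :: "'a set \<Rightarrow> ('a \<Rightarrow> 'a \<Rightarrow> bool) \<Rightarrow> bool" where
  "simple_graph V E \<longleftrightarrow> finite V \<and> (\<forall>x y. E x y \<longrightarrow> x \<in> V \<and> y \<in> V)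
     \<and> (\<forall>x y. E x y \<longrightarrow> E y x) \<and> (\<forall>x. \<not> E x x)"

definition is_clique :: "'a set \<Rightarrow> ('a \<Rightarrow> 'a \<Rightarrow> bool) \<Rightarrow> 'a set \<Rightarrow> bool" where
  "is_clique V E K \<longleftrightarrow> K \<subseteq> V \<and> (\<forall>x\<in>K. \<forall>y\<in>K. x \<noteq> y \<longrightarrow> E x y)"

definition maximal_clique :: "'a set \<Rightarrow> ('a \<Rightarrow> 'a \<Rightarrow> bool) \<Rightarrow> 'a set \<Rightarrow> bool" where
  "maximal_clique V E K \<longleftrightarrow> is_clique V E K \<and>
     (\<forall>K'. is_clique V E K' \<and> K \<subseteq> K' \<longrightarrow> K' = K)"

definition clique_geometry :: "'a set \<Rightarrow> ('a \<Rightarrow> 'a \<Rightarrow> bool) \<Rightarrow> 'a set set \<Rightarrow> bool" where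
  "clique_geometry V E \<C> \<longleftrightarrow> (\<forall>K\<in>\<C>. maximal_clique V E K) \<and>
     (\<forall>x y. E x y \<longrightarrow> (\<exists>!K. K \<in> \<C> \<and> x \<in> K \<and> y \<in> K))"

end

theory Submission
  imports Defs
begin

text \<open>Fix a member K of the geometry and double count the edges between K and the rest of
  the graph. A vertex x of K lies on at least r - 1 further members, which pairwise meet only
  in x and meet K only in x; so x has at least (r - 1)(l - 1) neighbours outside K. A vertex y
  outside K has at most R neighbours in K, because distinct neighbours x, x' in K give distinct
  members through y (a common one would contain the edge x x' and thus be K). Hence
  l (r - 1)(l - 1) \<le> |K| (r - 1)(l - 1) \<le> R (n - |K|) \<le> R (n - l), and since R \<ge> r this
  rearranges to l^2 r (r - 1) \<le> R^2 n.\<close>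

lemma clique_geometry_member_is_clique:
  "clique_geometry V E \<C> \<Longrightarrow> K \<in> \<C> \<Longrightarrow> is_clique V E K"
  unfolding clique_geometry_def maximal_clique_def by blast

lemma clique_geometry_member_subset:
  "clique_geometry V E \<C> \<Longrightarrow> K \<in> \<C> \<Longrightarrow> K \<subseteq> V"
  using clique_geometry_member_is_clique is_clique_def by metis

lemma clique_geometry_adjacent:
  "clique_geometry V E \<C> \<Longrightarrow> K \<in> \<C> \<Longrightarrow> x \<in> K \<Longrightarrow> y \<in> K \<Longrightarrow> x \<noteq> y \<Longrightarrow> E x y"
  using clique_geometry_member_is_clique is_clique_def by metis

lemma clique_geometry_finite:
  assumes "simple_graph V E" "clique_geometry V E \<C>"
  shows "finite \<C>"
proof (rule finite_subset)
  show "\<C> \<subseteq> Pow V" using clique_geometry_member_subset[OF assms(2)] by blast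
  show "finite (Pow V)" using assms(1) simple_graph_def by auto
qed

lemma clique_geometry_unique:
  assumes "clique_geometry V E \<C>" "E x y"
    and "K \<in> \<C>" "x \<in> K" "y \<in> K" "K' \<in> \<C>" "x \<in> K'" "y \<in> K'"
  shows "K = K'"
  using assms unfolding clique_geometry_def by blast

lemma clique_geometry_Int_eq:
  assumes "clique_geometry V E \<C>" "K \<in> \<C>" "K' \<in> \<C>" "K \<noteq> K'" "x \<in> K" "x \<in> K'"
  shows "K \<inter> K' = {x}"
proof (rule ccontr)
  assume "K \<inter> K' \<noteq> {x}"
  then obtain y where "y \<in> K" "y \<in> K'" "y \<noteq> x" using assms(5,6) by blast
  then have "E x y" using clique_geometry_adjacent[OF assms(1,2,5)] by metis
  then show False
    using clique_geometry_unique[OF assms(1)] assms \<open>y \<in> K\<close> \<open>y \<in> K'\<close> by metis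
qed

lemma clique_geometry_neighbours_outside_member:
  assumes "simple_graph V E" "clique_geometry V E \<C>" "K \<in> \<C>" "x \<in> K"
  shows "(\<Sum>K'\<in>{K' \<in> \<C>. x \<in> K'} - {K}. card K' - 1) \<le> card {y \<in> V - K. E x y}"
proof -
  let ?others = "{K' \<in> \<C>. x \<in> K'} - {K}"
  have finV: "finite V" using assms(1) simple_graph_def by auto
  have finite_members: "finite K'" if "K' \<in> \<C>" for K'
    using finite_subset[OF clique_geometry_member_subset[OF assms(2) that] finV] .
  have disjoint: "(A - {x}) \<inter> (B - {x}) = {}" if "A \<in> ?others" "B \<in> ?others" "A \<noteq> B" for A B
    using clique_geometry_Int_eq[OF assms(2)] that by blast
  have "(\<Sum>K'\<in>?others. card K' - 1) = (\<Sum>K'\<in>?others. card (K' - {x}))"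
    by (intro sum.cong) (auto simp: card_Diff_singleton)
  also have "\<dots> = card (\<Union>K'\<in>?others. K' - {x})"
    using clique_geometry_finite[OF assms(1,2)] finite_members disjoint
    by (subst card_UN_disjoint) auto
  also have "\<dots> \<le> card {y \<in> V - K. E x y}"
  proof (rule card_mono)
    show "finite {y \<in> V - K. E x y}" using finV by simp
    show "(\<Union>K'\<in>?others. K' - {x}) \<subseteq> {y \<in> V - K. E x y}"
      using clique_geometry_member_subset[OF assms(2)] clique_geometry_adjacent[OF assms(2)]
        clique_geometry_Int_eq[OF assms(2,3)] assms(4) by blast
  qed
  finally show ?thesis .
qed

lemma clique_geometry_neighbours_in_member:
  assumes "simple_graph V E" "clique_geometry V E \<C>" "K \<in> \<C>" "y \<notin> K"
  shows "card {x \<in> K. E x y} \<le> card {K' \<in> \<C>. y \<in> K'}"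
proof -
  define through_y where "through_y x = (THE K'. K' \<in> \<C> \<and> x \<in> K' \<and> y \<in> K')" for x
  have through_y: "through_y x \<in> {K' \<in> \<C>. y \<in> K'} \<and> x \<in> through_y x"
    if "x \<in> {x \<in> K. E x y}" for x
    using theI'[of "\<lambda>K'. K' \<in> \<C> \<and> x \<in> K' \<and> y \<in> K'"] assms(2) that
    unfolding through_y_def clique_geometry_def by auto
  have "inj_on through_y {x \<in> K. E x y}"
  proof (rule inj_onI, rule ccontr)
    fix a b assume a: "a \<in> {x \<in> K. E x y}" and b: "b \<in> {x \<in> K. E x y}"
      and "through_y a = through_y b" "a \<noteq> b"
    then have "K \<inter> through_y a \<supseteq> {a, b}" using through_y by auto
    then show False
      using clique_geometry_Int_eq[OF assms(2,3)] through_y[OF a] assms(4) \<open>a \<noteq> b\<close> by blast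
  qed
  then have "card {x \<in> K. E x y} = card (through_y ` {x \<in> K. E x y})"
    by (simp add: card_image)
  also have "\<dots> \<le> card {K' \<in> \<C>. y \<in> K'}"
    using through_y clique_geometry_finite[OF assms(1,2)] by (intro card_mono) auto
  finally show ?thesis .
qed

lemma clique_geometry_edges_leaving_member:
  assumes "simple_graph V E" "clique_geometry V E \<C>" "K \<in> \<C>"
    and "\<forall>v\<in>V. r \<le> card {K \<in> \<C>. v \<in> K} \<and> card {K \<in> \<C>. v \<in> K} \<le> R"
    and "\<forall>K\<in>\<C>. l \<le> card K"
  shows "card K * ((r - 1) * (l - 1)) \<le> R * (card V - card K)"
proof -
  have finV: "finite V" using assms(1) simple_graph_def by auto
  have K_sub: "K \<subseteq> V" using clique_geometry_member_subset[OF assms(2,3)] .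
  have finK: "finite K" using finite_subset[OF K_sub finV] .
  have lower: "(r - 1) * (l - 1) \<le> card {y \<in> V - K. E x y}" if "x \<in> K" for x
  proof -
    let ?others = "{K' \<in> \<C>. x \<in> K'} - {K}"
    have "r - 1 \<le> card ?others"
      using assms(3,4) that K_sub clique_geometry_finite[OF assms(1,2)]
      by (subst card_Diff_singleton) (auto intro: diff_le_mono)
    then have "(r - 1) * (l - 1) \<le> (\<Sum>K'\<in>?others. l - 1)"
      by simp
    also have "\<dots> \<le> (\<Sum>K'\<in>?others. card K' - 1)"
      using assms(5) by (intro sum_mono) (simp add: diff_le_mono)
    also have "\<dots> \<le> card {y \<in> V - K. E x y}"
      using clique_geometry_neighbours_outside_member[OF assms(1-3) that] .
    finally show ?thesis .
  qed
  have upper: "card {x \<in> K. E x y} \<le> R" if "y \<in> V - K" for y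
    using clique_geometry_neighbours_in_member[OF assms(1-3)] assms(4) that
    by (meson DiffD1 DiffD2 order_trans)
  have "card K * ((r - 1) * (l - 1)) \<le> (\<Sum>x\<in>K. card {y \<in> V - K. E x y})"
    using sum_mono[OF lower] by simp
  also have "\<dots> = (\<Sum>y\<in>V - K. card {x \<in> K. E x y})"
    using finK finV by (intro sum_multicount_gen) auto
  also have "\<dots> \<le> (\<Sum>y\<in>V - K. R)"
    using upper by (rule sum_mono)
  also have "\<dots> = R * (card V - card K)"
    using finK K_sub by (simp add: card_Diff_subset)
  finally show ?thesis .
qed

lemma clique_geometry_order_edge_count:
  assumes "simple_graph V E" "clique_geometry V E \<C>" "K \<in> \<C>"
    and "\<forall>v\<in>V. r \<le> card {K \<in> \<C>. v \<in> K} \<and> card {K \<in> \<C>. v \<in> K} \<le> R"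
    and "\<forall>K\<in>\<C>. l \<le> card K"
  shows "l * ((r - 1) * (l - 1)) \<le> R * (card V - l)"
proof -
  have "l \<le> card K" using assms(3,5) by blast
  then have "l * ((r - 1) * (l - 1)) \<le> card K * ((r - 1) * (l - 1))"
    by simp
  also have "\<dots> \<le> R * (card V - card K)"
    using clique_geometry_edges_leaving_member[OF assms] .
  also have "\<dots> \<le> R * (card V - l)"
    using \<open>l \<le> card K\<close> by (intro mult_le_mono2 diff_le_mono2)
  finally show ?thesis .
qed

lemma order_bound_from_edge_count:
  fixes l r R n :: nat
  assumes "r \<ge> 2" "R \<ge> r" "l \<le> n"
    and edge_count: "l * ((r - 1) * (l - 1)) \<le> R * (n - l)"
  shows "real l \<le> real R / sqrt (real r * (real r - 1)) * sqrt (real n)"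
proof -
  have rr: "real r * (real r - 1) > 0" using assms by simp
  have "real l * (real r - 1) * (real l - 1) \<le> real R * (real n - real l)"
  proof (cases "l = 0")
    case False
    have "real (l * ((r - 1) * (l - 1))) \<le> real (R * (n - l))"
      using edge_count by (simp only: of_nat_le_iff)
    then show ?thesis
      using False assms(1,3) by (simp add: of_nat_diff mult.assoc)
  qed simp
  then have "real R * (real l * (real r - 1) * (real l - 1)) \<le> real R * (real R * (real n - real l))"
    by (rule mult_left_mono) simp
  then have "real R * real l * real l * (real r - 1) + real R * real l * (real R - real r + 1)
      \<le> real R * real R * real n"
    by (simp add: algebra_simps)
  moreover have "real r * real l * real l * (real r - 1) \<le> real R * real l * real l * (real r - 1)"
    using assms by (intro mult_right_mono) auto
  moreover have "real R * real l * (real R - real r + 1) \<ge> 0" using assms by simp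
  ultimately have "real l * real l * (real r * (real r - 1)) \<le> real R * real R * real n"
    by (simp add: algebra_simps)
  moreover have "(real l * sqrt (real r * (real r - 1)))\<^sup>2 = real l * real l * (real r * (real r - 1))"
    using rr by (simp add: power_mult_distrib power2_eq_square)
  moreover have "(real R * sqrt (real n))\<^sup>2 = real R * real R * real n"
    by (simp add: power_mult_distrib power2_eq_square)
  ultimately have "(real l * sqrt (real r * (real r - 1)))\<^sup>2 \<le> (real R * sqrt (real n))\<^sup>2"
    by simp
  then have "real l * sqrt (real r * (real r - 1)) \<le> real R * sqrt (real n)"
    by (rule power2_le_imp_le) simp
  then show ?thesis using rr by (simp add: field_simps)
qed

theorem lemma10:
  fixes V :: "'a set" and E :: "'a \<Rightarrow> 'a \<Rightarrow> bool" and \<C> :: "'a set set"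
    and n r R l :: nat
  assumes "simple_graph V E"
    and "V \<noteq> {}"
    and "card V = n"
    and "clique_geometry V E \<C>"
    and "r \<ge> 2"
    and "\<forall>v\<in>V. r \<le> card {K \<in> \<C>. v \<in> K} \<and> card {K \<in> \<C>. v \<in> K} \<le> R"
    and "\<forall>K\<in>\<C>. l \<le> card K"
  shows "real l \<le> real R / sqrt (real r * (real r - 1)) * sqrt (real n)"
proof -
  obtain v where "v \<in> V" using assms(2) by blast
  then have "card {K \<in> \<C>. v \<in> K} > 0" "r \<le> R" using assms(5,6) by fastforce+
  then obtain K where K: "K \<in> \<C>" by (auto simp: card_gt_0_iff)
  have "l \<le> n"
    using assms(1,3,7) K clique_geometry_member_subset[OF assms(4) K]
    by (fastforce simp: simple_graph_def intro: le_trans card_mono)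
  moreover have "l * ((r - 1) * (l - 1)) \<le> R * (n - l)"
    using clique_geometry_order_edge_count[OF assms(1,4) K assms(6,7)] assms(3) by simp
  ultimately show ?thesis
    using order_bound_from_edge_count assms(5) \<open>r \<le> R\<close> by blast
qed

end
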